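(* Let $\alpha,\beta>0$, $\tau>0$, and let $\{S_{\alpha,\beta}^n\}_{n\in\mathbb{N}_0}\subset\mathcal{B}(X)$ be a discrete $(\alpha,\beta)$-resolvent family generated by a closed linear operator $A$ on a Banach space $X$ (so that $\tau^{-\alpha}\in\rho(A)$). Let $R_\tau:=\tau^{-\alpha}(\tau^{-\alpha}-A)^{-1}$. Then for every $x\in X$, $$S_{\alpha,\beta}^0x=a_{0,1}R_\tau x,\qquad S_{\alpha,\beta}^1x=a_{1,1}R_\tau x+a_{1,2}R_\tau^2 x,$$ and for every $n\geq 2$, $$S_{\alpha,\beta}^nx=\sum_{j=1}^{n+1}a_{n,j}R_\tau^j x,$$ where the scalars $a_{n,l}$ are defined as follows (writing $k(\cdot)$ for $k^\alpha_\tau(\cdot)$): $a_{0,1}:=k_\tau^\beta(0)$, $a_{1,1}:=\big(k_\tau^\beta(1)k(0)-k_\tau^\beta(0)k(1)\big)k(0)^{-1}$, $a_{1,2}:=k_\tau^\beta(0)k(1)k(0)^{-1}$, and for $n\geq 2$: $a_{n,n+1}:=k(1)a_{n-1,n}k(0)^{-1}$; $a_{n,1}:=\Big(k_\tau^\beta(n)k(0)-\sum_{j=0}^{n-1}k(n-j)a_{j,1}\Big)k(0)^{-1}$; $a_{n,l}:=\Big(\sum_{j=l-2}^{n-1}k(n-j)a_{j,l-1}-\sum_{j=l-1}^{n-1}k(n-j)a_{j,l}\Big)k(0)^{-1}$ for $2\leq l\leq n$.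
   Context: Fix a step size $\tau>0$. For $\gamma>0$ and $n\in\mathbb{N}_0$ let $k_\tau^\gamma(n):=\frac{\tau^{\gamma-1}\Gamma(\gamma+n)}{\Gamma(\gamma)\Gamma(n+1)}$ (so $k^\alpha_\tau(0)=\tau^{\alpha-1}\neq 0$). For $\alpha,\beta>0$, a sequence $\{S_{\alpha,\beta}^n\}_{n\in\mathbb{N}_0}\subset\mathcal{B}(X)$ is called a discrete $(\alpha,\beta)$-resolvent family generated by the closed operator $A:D(A)\subset X\to X$ if (1) $S^n_{\alpha,\beta}x\in D(A)$ for all $x\in X$, $n\in\mathbb N_0$, and $AS_{\alpha,\beta}^nx=S_{\alpha,\beta}^nAx$ for all $x\in D(A)$, $n\in\mathbb{N}_0$; (2) for every $x\in X$ and $n\in\mathbb{N}_0$, $S_{\alpha,\beta}^nx=k^\beta_\tau(n)x+\tau A\sum_{j=0}^n k^\alpha_\tau(n-j)S_{\alpha,\beta}^jx$. *)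

theory Defs
  imports "HOL-Analysis.Analysis"
begin

definition kk :: "real \<Rightarrow> real \<Rightarrow> nat \<Rightarrow> real" where
  "kk \<tau> \<gamma> n = \<tau> powr (\<gamma> - 1) * Gamma (\<gamma> + real n) / (Gamma \<gamma> * Gamma (real n + 1))"

text \<open>Closed linear operator \<open>A\<close> with domain \<open>D\<close> (values of \<open>A\<close> outside \<open>D\<close> are irrelevant).\<close>
definition closed_lin_op :: "'a::real_normed_vector set \<Rightarrow> ('a \<Rightarrow> 'a) \<Rightarrow> bool" where
  "closed_lin_op D A \<longleftrightarrow> subspace D \<and>
     (\<forall>x\<in>D. \<forall>y\<in>D. A (x + y) = A x + A y) \<and>
     (\<forall>c. \<forall>x\<in>D. A (c *\<^sub>R x) = c *\<^sub>R A x) \<and>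
     closed {(x, A x) | x. x \<in> D}"

definition discrete_resolvent_family ::
  "real \<Rightarrow> real \<Rightarrow> real \<Rightarrow> 'a::real_normed_vector set \<Rightarrow> ('a \<Rightarrow> 'a) \<Rightarrow> (nat \<Rightarrow> 'a \<Rightarrow> 'a) \<Rightarrow> bool" where
  "discrete_resolvent_family \<tau> \<alpha> \<beta> D A S \<longleftrightarrow>
     (\<forall>n. bounded_linear (S n)) \<and>
     (\<forall>n x. S n x \<in> D) \<and>
     (\<forall>n. \<forall>x\<in>D. A (S n x) = S n (A x)) \<and>
     (\<forall>n x. S n x = kk \<tau> \<beta> n *\<^sub>R x + \<tau> *\<^sub>R A (\<Sum>j=0..n. kk \<tau> \<alpha> (n - j) *\<^sub>R S j x))"

definition is_inverse_of_shift :: "'a::real_normed_vector set \<Rightarrow> ('a \<Rightarrow> 'a) \<Rightarrow> real \<Rightarrow> ('a \<Rightarrow> 'a) \<Rightarrow> bool" where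
  "is_inverse_of_shift D A c R \<longleftrightarrow> bounded_linear R \<and>
     (\<forall>x. R x \<in> D \<and> c *\<^sub>R R x - A (R x) = x) \<and>
     (\<forall>y\<in>D. R (c *\<^sub>R y - A y) = y)"

definition in_resolvent_set :: "'a::real_normed_vector set \<Rightarrow> ('a \<Rightarrow> 'a) \<Rightarrow> real \<Rightarrow> bool" where
  "in_resolvent_set D A c \<longleftrightarrow> (\<exists>R. is_inverse_of_shift D A c R)"

definition resolvent_op :: "'a::real_normed_vector set \<Rightarrow> ('a \<Rightarrow> 'a) \<Rightarrow> real \<Rightarrow> 'a \<Rightarrow> 'a" where
  "resolvent_op D A c = (THE R. is_inverse_of_shift D A c R)"

definition R_tau :: "real \<Rightarrow> real \<Rightarrow> 'a::real_normed_vector set \<Rightarrow> ('a \<Rightarrow> 'a) \<Rightarrow> 'a \<Rightarrow> 'a" where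
  "R_tau \<tau> \<alpha> D A = (\<lambda>x. (\<tau> powr (-\<alpha>)) *\<^sub>R resolvent_op D A (\<tau> powr (-\<alpha>)) x)"

declare sum.cong[fundef_cong]

text \<open>The coefficients \<open>a_{n,l}\<close> (set to 0 outside the range \<open>1 \<le> l \<le> n+1\<close>, where they are never used).\<close>
fun acoef :: "real \<Rightarrow> real \<Rightarrow> real \<Rightarrow> nat \<Rightarrow> nat \<Rightarrow> real" where
  "acoef \<tau> \<alpha> \<beta> n l =
    (if n = 0 then (if l = 1 then kk \<tau> \<beta> 0 else 0)
     else if n = 1 then
       (if l = 1 then (kk \<tau> \<beta> 1 * kk \<tau> \<alpha> 0 - kk \<tau> \<beta> 0 * kk \<tau> \<alpha> 1) / kk \<tau> \<alpha> 0
        else if l = 2 then kk \<tau> \<beta> 0 * kk \<tau> \<alpha> 1 / kk \<tau> \<alpha> 0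
        else 0)
     else
       (if l = n + 1 then kk \<tau> \<alpha> 1 * acoef \<tau> \<alpha> \<beta> (n - 1) n / kk \<tau> \<alpha> 0
        else if l = 1 then
          (kk \<tau> \<beta> n * kk \<tau> \<alpha> 0 - (\<Sum>j=0..n-1. kk \<tau> \<alpha> (n - j) * acoef \<tau> \<alpha> \<beta> j 1)) / kk \<tau> \<alpha> 0
        else if 2 \<le> l \<and> l \<le> n then
          ((\<Sum>j=l-2..n-1. kk \<tau> \<alpha> (n - j) * acoef \<tau> \<alpha> \<beta> j (l - 1))
           - (\<Sum>j=l-1..n-1. kk \<tau> \<alpha> (n - j) * acoef \<tau> \<alpha> \<beta> j l)) / kk \<tau> \<alpha> 0
        else 0))"

end

(* With c = tau^(-alpha), the defining identity gives (c - A) S^n x = c (k^beta(n) x +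
   tau sum_{j<n} k(n-j) A S^j x), because tau c k(0) = 1.  For n = 0 this exhibits
   S^0 / (c k^beta(0)) as the inverse of c - A, so c lies in the resolvent set and
   R_tau = S^0 / k^beta(0).  Applying R_tau and using R_tau A = c (R_tau - I) on D yields
   S^n = k^beta(n) R_tau + sum_{j<n} k(n-j)/k(0) (R_tau - I) S^j, and strong induction on n
   expands S^n as a polynomial in R_tau whose coefficients obey exactly the recursion
   defining a_{n,l}. *)

theory Submission
  imports Defs
begin

declare acoef.simps[simp del]

lemma acoef_eq_0:
  assumes "l = 0 \<or> n + 1 < l"
  shows "acoef \<tau> \<alpha> \<beta> n l = 0"
  using assms by (subst acoef.simps) auto

lemma acoef_0: "acoef \<tau> \<alpha> \<beta> 0 l = (if l = 1 then kk \<tau> \<beta> 0 else 0)"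
  by (subst acoef.simps) simp

lemma sum_atLeastAtMost_eq_lessThan:
  fixes f :: "nat \<Rightarrow> 'b::comm_monoid_add"
  assumes "0 < n" and "\<And>j. j < m \<Longrightarrow> f j = 0"
  shows "(\<Sum>j=m..n-1. f j) = (\<Sum>j<n. f j)"
  by (rule sum.mono_neutral_left) (use assms in auto)

text \<open>The case distinction defining \<open>acoef\<close> collapses to one recursion, since the
  coefficients outside \<open>1 \<le> l \<le> n + 1\<close> vanish.\<close>

lemma acoef_recurrence:
  assumes "kk \<tau> \<alpha> 0 \<noteq> 0"
  shows "acoef \<tau> \<alpha> \<beta> n l = (if l = 1 then kk \<tau> \<beta> n else 0)
     + (\<Sum>j<n. kk \<tau> \<alpha> (n - j) / kk \<tau> \<alpha> 0 *
          ((if l = 0 then 0 else acoef \<tau> \<alpha> \<beta> j (l - 1)) - acoef \<tau> \<alpha> \<beta> j l))"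
    (is "?a n l = ?rhs")
proof -
  let ?k = "kk \<tau> \<alpha>"
  have sum_split: "(\<Sum>j<n. ?k (n - j) / ?k 0 * (u j - v j))
      = ((\<Sum>j<n. ?k (n - j) * u j) - (\<Sum>j<n. ?k (n - j) * v j)) / ?k 0" for u v :: "nat \<Rightarrow> real"
    by (simp add: sum_divide_distrib sum_subtractf[symmetric] field_simps)
  consider "n = 0" | "n = 1" | "n \<ge> 2 \<and> (l = 0 \<or> n + 1 < l)" | "n \<ge> 2 \<and> l = 1"
    | "n \<ge> 2 \<and> 2 \<le> l \<and> l \<le> n" | "n \<ge> 2 \<and> l = n + 1"
    by linarith
  then show ?thesis
  proof cases
    case 1
    then show ?thesis by (simp add: acoef_0)
  next
    case 2
    have a1: "?a 1 l = (if l = 1 then (kk \<tau> \<beta> 1 * ?k 0 - kk \<tau> \<beta> 0 * ?k 1) / ?k 0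
        else if l = 2 then kk \<tau> \<beta> 0 * ?k 1 / ?k 0 else 0)"
      by (subst acoef.simps) simp
    have s: "{..<1::nat} = {0}" by auto
    show ?thesis using assms unfolding 2 a1 s by (auto simp: acoef_0 field_simps)
  next
    case 3
    then show ?thesis by (auto simp: acoef_eq_0 intro!: sum.neutral)
  next
    case 4
    then have "?a n l = (kk \<tau> \<beta> n * ?k 0 - (\<Sum>j<n. ?k (n - j) * ?a j 1)) / ?k 0"
      by (subst acoef.simps) (simp add: atLeast0LessThan[symmetric] atLeastLessThanSuc_atLeastAtMost[symmetric])
    then show ?thesis using 4 assms unfolding sum_split by (simp add: acoef_eq_0 field_simps)
  next
    case 5
    then have "?a n l = ((\<Sum>j=l-2..n-1. ?k (n - j) * ?a j (l - 1))
        - (\<Sum>j=l-1..n-1. ?k (n - j) * ?a j l)) / ?k 0"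
      by (subst acoef.simps) simp
    also have "\<dots> = ((\<Sum>j<n. ?k (n - j) * ?a j (l - 1)) - (\<Sum>j<n. ?k (n - j) * ?a j l)) / ?k 0"
    proof -
      have "(\<Sum>j=l-2..n-1. ?k (n - j) * ?a j (l - 1)) = (\<Sum>j<n. ?k (n - j) * ?a j (l - 1))"
        by (rule sum_atLeastAtMost_eq_lessThan) (use 5 in \<open>auto simp: acoef_eq_0\<close>)
      moreover have "(\<Sum>j=l-1..n-1. ?k (n - j) * ?a j l) = (\<Sum>j<n. ?k (n - j) * ?a j l)"
        by (rule sum_atLeastAtMost_eq_lessThan) (use 5 in \<open>auto simp: acoef_eq_0\<close>)
      ultimately show ?thesis by simp
    qed
    finally show ?thesis using 5 unfolding sum_split by simp
  next
    case 6
    then obtain m where m: "n = Suc m" by (cases n) auto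
    have "?a n l = ?k 1 * ?a m n / ?k 0"
      using 6 m by (subst acoef.simps) simp
    moreover have "(\<Sum>j<m. ?k (n - j) / ?k 0 * (?a j n - ?a j l)) = 0"
      using 6 m by (auto simp: acoef_eq_0 intro!: sum.neutral)
    ultimately show ?thesis using 6 m by (simp add: acoef_eq_0)
  qed
qed

lemma kk_0:
  assumes "\<gamma> > 0"
  shows "kk \<tau> \<gamma> 0 = \<tau> powr (\<gamma> - 1)"
  using Gamma_real_pos[OF assms] by (simp add: kk_def)

lemma closed_lin_op_0:
  assumes "closed_lin_op D A"
  shows "A 0 = 0"
proof -
  have "0 \<in> D" and "\<forall>x\<in>D. A (0 *\<^sub>R x) = 0 *\<^sub>R A x"
    using assms subspace_0 unfolding closed_lin_op_def by blast+
  then show ?thesis by force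
qed

lemma closed_lin_op_sum:
  assumes "closed_lin_op D A" and "\<And>i. i \<in> I \<Longrightarrow> v i \<in> D"
  shows "A (\<Sum>i\<in>I. v i) = (\<Sum>i\<in>I. A (v i))"
proof (cases "finite I")
  case True
  have "subspace D" using assms(1) unfolding closed_lin_op_def by blast
  from True assms(2) show ?thesis
  proof (induction I rule: finite_induct)
    case empty
    then show ?case using closed_lin_op_0[OF assms(1)] by simp
  next
    case (insert i I)
    then have "v i \<in> D" and "sum v I \<in> D"
      using \<open>subspace D\<close> by (auto intro: subspace_sum)
    then show ?case using insert assms(1) unfolding closed_lin_op_def by simp
  qed
qed (simp add: closed_lin_op_0[OF assms(1)])

lemma is_inverse_of_shift_unique:
  assumes "is_inverse_of_shift D A c R" and "is_inverse_of_shift D A c R'"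
  shows "R' = R"
proof
  fix x
  have "R' x \<in> D" and "c *\<^sub>R R' x - A (R' x) = x" and "\<forall>y\<in>D. R (c *\<^sub>R y - A y) = y"
    using assms unfolding is_inverse_of_shift_def by auto
  then show "R' x = R x" by metis
qed

lemma resolvent_op_eqI:
  assumes "is_inverse_of_shift D A c R"
  shows "resolvent_op D A c = R"
  unfolding resolvent_op_def
  using assms is_inverse_of_shift_unique[OF assms] by (rule the_equality)

lemma linear_sum_powers_shift:
  assumes "linear T" and "a M = 0"
  shows "T (\<Sum>l\<le>M. a l *\<^sub>R (T ^^ l) x) = (\<Sum>l\<le>M. (if l = 0 then 0 else a (l - 1)) *\<^sub>R (T ^^ l) x)"
proof -
  have "T (\<Sum>l\<le>M. a l *\<^sub>R (T ^^ l) x) = (\<Sum>l\<le>M. a l *\<^sub>R (T ^^ Suc l) x)"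
    using assms(1) by (simp add: linear_sum linear_scale)
  also have "\<dots> = (\<Sum>l\<le>Suc M. (if l = 0 then 0 else a (l - 1)) *\<^sub>R (T ^^ l) x)"
    by (simp only: sum.atMost_Suc_shift) simp
  also have "\<dots> = (\<Sum>l\<le>M. (if l = 0 then 0 else a (l - 1)) *\<^sub>R (T ^^ l) x)"
    using assms(2) by simp
  finally show ?thesis .
qed

locale discrete_resolvent =
  fixes \<tau> \<alpha> \<beta> :: real and D :: "'a::real_normed_vector set"
    and A :: "'a \<Rightarrow> 'a" and S :: "nat \<Rightarrow> 'a \<Rightarrow> 'a"
  assumes alpha_pos: "\<alpha> > 0" and beta_pos: "\<beta> > 0" and tau_pos: "\<tau> > 0"
    and closed_op: "closed_lin_op D A"
    and family: "discrete_resolvent_family \<tau> \<alpha> \<beta> D A S"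
begin

abbreviation c :: real where "c \<equiv> \<tau> powr (-\<alpha>)"

abbreviation k :: "nat \<Rightarrow> real" where "k \<equiv> kk \<tau> \<alpha>"

abbreviation R :: "'a \<Rightarrow> 'a" where "R \<equiv> R_tau \<tau> \<alpha> D A"

lemma bounded_linear_S: "bounded_linear (S n)"
  and S_in_domain: "S n x \<in> D"
  and A_S_commute: "y \<in> D \<Longrightarrow> A (S n y) = S n (A y)"
  and S_defining_eq: "S n x = kk \<tau> \<beta> n *\<^sub>R x + \<tau> *\<^sub>R A (\<Sum>j=0..n. k (n - j) *\<^sub>R S j x)"
  using family unfolding discrete_resolvent_family_def by blast+

lemma A_scaleR: "x \<in> D \<Longrightarrow> A (r *\<^sub>R x) = r *\<^sub>R A x"
  using closed_op unfolding closed_lin_op_def by blast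

lemma scaleR_S_in_domain: "r *\<^sub>R S n x \<in> D"
  using closed_op S_in_domain unfolding closed_lin_op_def by (simp add: subspace_scale)

lemma c_pos: "c > 0"
  using tau_pos by simp

lemma k_0_pos: "k 0 > 0" and kk_beta_0_pos: "kk \<tau> \<beta> 0 > 0"
  using tau_pos kk_0[OF alpha_pos] kk_0[OF beta_pos] by simp_all

lemma tau_c_k_0: "\<tau> * c * k 0 = 1"
  using tau_pos by (simp add: kk_0[OF alpha_pos] powr_minus powr_diff field_simps)

lemma shift_S:
  "c *\<^sub>R S n x - A (S n x) = c *\<^sub>R (kk \<tau> \<beta> n *\<^sub>R x + \<tau> *\<^sub>R (\<Sum>j<n. k (n - j) *\<^sub>R A (S j x)))"
proof -
  have "A (\<Sum>j=0..n. k (n - j) *\<^sub>R S j x) = (\<Sum>j=0..n. k (n - j) *\<^sub>R A (S j x))"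
    by (simp add: closed_lin_op_sum[OF closed_op] scaleR_S_in_domain A_scaleR S_in_domain)
  also have "\<dots> = (\<Sum>j<n. k (n - j) *\<^sub>R A (S j x)) + k 0 *\<^sub>R A (S n x)"
    by (simp add: atLeast0AtMost lessThan_Suc_atMost[symmetric])
  finally have "c *\<^sub>R S n x = c *\<^sub>R (kk \<tau> \<beta> n *\<^sub>R x + \<tau> *\<^sub>R (\<Sum>j<n. k (n - j) *\<^sub>R A (S j x)))
      + (\<tau> * c * k 0) *\<^sub>R A (S n x)"
    by (subst S_defining_eq) (simp add: algebra_simps)
  then show ?thesis by (simp add: tau_c_k_0)
qed

lemma is_inverse_of_shift_S_0: "is_inverse_of_shift D A c (\<lambda>x. (1 / (c * kk \<tau> \<beta> 0)) *\<^sub>R S 0 x)"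
  (is "is_inverse_of_shift D A c ?R")
proof -
  have shift_S_0: "c *\<^sub>R S 0 x - A (S 0 x) = (c * kk \<tau> \<beta> 0) *\<^sub>R x" for x
    using shift_S[of 0 x] by simp
  have scale_cancel: "(1 / (c * kk \<tau> \<beta> 0)) *\<^sub>R (c * kk \<tau> \<beta> 0) *\<^sub>R x = x" for x :: 'a
    using c_pos kk_beta_0_pos by simp
  show ?thesis
  proof (unfold is_inverse_of_shift_def, intro conjI allI ballI)
    show "bounded_linear ?R"
      by (rule bounded_linear_const_scaleR[OF bounded_linear_S])
    fix x
    show "?R x \<in> D"
      by (rule scaleR_S_in_domain)
    have "c *\<^sub>R ?R x - A (?R x) = (1 / (c * kk \<tau> \<beta> 0)) *\<^sub>R (c *\<^sub>R S 0 x - A (S 0 x))"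
      by (simp add: A_scaleR S_in_domain algebra_simps)
    then show "c *\<^sub>R ?R x - A (?R x) = x"
      by (simp only: shift_S_0 scale_cancel)
  next
    fix y assume "y \<in> D"
    have "linear (S 0)"
      using bounded_linear_S bounded_linear.linear by blast
    then have "?R (c *\<^sub>R y - A y) = (1 / (c * kk \<tau> \<beta> 0)) *\<^sub>R (c *\<^sub>R S 0 y - A (S 0 y))"
      by (simp add: A_S_commute[OF \<open>y \<in> D\<close>] linear_diff linear_scale)
    then show "?R (c *\<^sub>R y - A y) = y"
      by (simp only: shift_S_0 scale_cancel)
  qed
qed

lemma R_eq: "R x = (1 / kk \<tau> \<beta> 0) *\<^sub>R S 0 x"
  using resolvent_op_eqI[OF is_inverse_of_shift_S_0] c_pos by (simp add: R_tau_def)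

lemma linear_R: "linear R"
  unfolding R_eq[abs_def]
  by (rule bounded_linear.linear[OF bounded_linear_const_scaleR[OF bounded_linear_S]])

lemma R_A:
  assumes "z \<in> D"
  shows "R (A z) = c *\<^sub>R R z - c *\<^sub>R z"
proof -
  have "R (A z) = (1 / kk \<tau> \<beta> 0) *\<^sub>R A (S 0 z)"
    by (simp add: R_eq A_S_commute[OF assms])
  also have "A (S 0 z) = c *\<^sub>R S 0 z - (c * kk \<tau> \<beta> 0) *\<^sub>R z"
    using shift_S[of 0 z] by (simp add: algebra_simps)
  finally show ?thesis
    using kk_beta_0_pos by (simp add: R_eq scaleR_diff_right)
qed

lemma S_recurrence:
  "S n x = kk \<tau> \<beta> n *\<^sub>R R x + (\<Sum>j<n. (k (n - j) / k 0) *\<^sub>R (R (S j x) - S j x))"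
proof -
  have "c *\<^sub>R S n x = R (c *\<^sub>R S n x - A (S n x))"
    using R_A[OF S_in_domain] linear_R by (simp add: linear_diff linear_scale)
  also have "\<dots> = c *\<^sub>R (kk \<tau> \<beta> n *\<^sub>R R x + \<tau> *\<^sub>R (\<Sum>j<n. k (n - j) *\<^sub>R R (A (S j x))))"
    unfolding shift_S using linear_R by (simp add: linear_add linear_scale linear_sum)
  also have "\<tau> *\<^sub>R (\<Sum>j<n. k (n - j) *\<^sub>R R (A (S j x)))
      = (\<Sum>j<n. (\<tau> * c * k (n - j)) *\<^sub>R (R (S j x) - S j x))"
    by (simp add: R_A S_in_domain scaleR_sum_right scaleR_diff_right mult_ac)
  also have "\<dots> = (\<Sum>j<n. (k (n - j) / k 0) *\<^sub>R (R (S j x) - S j x))"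
  proof -
    have "\<tau> * c = 1 / k 0"
      using tau_c_k_0 k_0_pos by (simp add: field_simps)
    then show ?thesis by simp
  qed
  finally show ?thesis using c_pos by simp
qed

lemma S_expansion:
  assumes "n + 1 \<le> M"
  shows "S n x = (\<Sum>l\<le>M. acoef \<tau> \<alpha> \<beta> n l *\<^sub>R (R ^^ l) x)"
  using assms
proof (induction n rule: less_induct)
  case (less n)
  let ?a = "acoef \<tau> \<alpha> \<beta>"
  let ?d = "\<lambda>j l. (if l = 0 then 0 else ?a j (l - 1)) - ?a j l"
  have R_S_minus_S: "R (S j x) - S j x = (\<Sum>l\<le>M. ?d j l *\<^sub>R (R ^^ l) x)" if "j < n" for j
  proof -
    have "S j x = (\<Sum>l\<le>M. ?a j l *\<^sub>R (R ^^ l) x)"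
      using less that by simp
    moreover have "?a j M = 0"
      using that less.prems by (simp add: acoef_eq_0)
    ultimately show ?thesis
      by (simp add: linear_sum_powers_shift[OF linear_R] sum_subtractf[symmetric] scaleR_diff_left)
  qed
  have first_term: "(\<Sum>l\<le>M. (if l = 1 then kk \<tau> \<beta> n else 0) *\<^sub>R (R ^^ l) x) = kk \<tau> \<beta> n *\<^sub>R R x"
    using less.prems by (simp add: if_distrib[of "\<lambda>r. r *\<^sub>R _"] cong: if_cong)
  have swap: "(\<Sum>j<n. (k (n - j) / k 0) *\<^sub>R (\<Sum>l\<le>M. ?d j l *\<^sub>R (R ^^ l) x))
      = (\<Sum>l\<le>M. (\<Sum>j<n. k (n - j) / k 0 * ?d j l) *\<^sub>R (R ^^ l) x)"
    unfolding scaleR_sum_right scaleR_sum_left scaleR_scaleR by (rule sum.swap)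
  have "S n x = kk \<tau> \<beta> n *\<^sub>R R x + (\<Sum>j<n. (k (n - j) / k 0) *\<^sub>R (\<Sum>l\<le>M. ?d j l *\<^sub>R (R ^^ l) x))"
    using S_recurrence[of n x] R_S_minus_S by simp
  also have "\<dots> = (\<Sum>l\<le>M. ((if l = 1 then kk \<tau> \<beta> n else 0) + (\<Sum>j<n. k (n - j) / k 0 * ?d j l)) *\<^sub>R (R ^^ l) x)"
    unfolding swap first_term[symmetric] scaleR_add_left sum.distrib ..
  also have "\<dots> = (\<Sum>l\<le>M. ?a n l *\<^sub>R (R ^^ l) x)"
    using acoef_recurrence k_0_pos by simp
  finally show ?case .
qed

end

theorem theorem3p11:
  fixes \<tau> \<alpha> \<beta> :: real
    and D :: "'a::banach set" and A :: "'a \<Rightarrow> 'a" and S :: "nat \<Rightarrow> 'a \<Rightarrow> 'a"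
  assumes "\<alpha> > 0" and "\<beta> > 0" and "\<tau> > 0"
    and "closed_lin_op D A"
    and "discrete_resolvent_family \<tau> \<alpha> \<beta> D A S"
  shows "in_resolvent_set D A (\<tau> powr (-\<alpha>))
    \<and> (\<forall>x. S 0 x = acoef \<tau> \<alpha> \<beta> 0 1 *\<^sub>R R_tau \<tau> \<alpha> D A x)
    \<and> (\<forall>x. S 1 x = acoef \<tau> \<alpha> \<beta> 1 1 *\<^sub>R R_tau \<tau> \<alpha> D A x
                 + acoef \<tau> \<alpha> \<beta> 1 2 *\<^sub>R (R_tau \<tau> \<alpha> D A ^^ 2) x)
    \<and> (\<forall>n x. n \<ge> 2 \<longrightarrow>
          S n x = (\<Sum>j=1..n+1. acoef \<tau> \<alpha> \<beta> n j *\<^sub>R (R_tau \<tau> \<alpha> D A ^^ j) x))"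
proof -
  interpret discrete_resolvent \<tau> \<alpha> \<beta> D A S
    using assms by unfold_locales
  have expansion: "S n x = (\<Sum>l=1..n+1. acoef \<tau> \<alpha> \<beta> n l *\<^sub>R (R ^^ l) x)" for n x
  proof -
    have "S n x = (\<Sum>l\<le>n+1. acoef \<tau> \<alpha> \<beta> n l *\<^sub>R (R ^^ l) x)"
      by (rule S_expansion) simp
    then show ?thesis
      by (simp add: atMost_atLeast0 sum.atLeast_Suc_atMost acoef_eq_0)
  qed
  have "in_resolvent_set D A (\<tau> powr (-\<alpha>))"
    unfolding in_resolvent_set_def using is_inverse_of_shift_S_0 by blast
  moreover have "S 1 x = acoef \<tau> \<alpha> \<beta> 1 1 *\<^sub>R R x + acoef \<tau> \<alpha> \<beta> 1 2 *\<^sub>R (R ^^ 2) x" for x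
    using expansion[of 1 x] by (simp add: numeral_2_eq_2)
  ultimately show ?thesis
    using expansion[of 0] expansion by simp
qed

end
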